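(* Let $X$ be a scalable monoid over $R$. If $\mathsf{C}$ is a non-trivial orbitoid of $X$ (i.e. $\mathsf{C}\neq\{0_{\mathsf{C}}\}$) that contains a unit element, then $R$ is a non-trivial commutative ring, and $\mathsf{C}$, equipped with the addition $x+y=(\rho+\sigma)\cdot u$ (for $x=\rho\cdot u$, $y=\sigma\cdot u$, $u$ a unit element for $\mathsf{C}$) and with the scalar multiplication $(\lambda,x)\mapsto\lambda\cdot x$ inherited from $X$, is a free module of rank 1 over $R$.
   Context: $R$ is a unital associative (not necessarily commutative) ring. A scalable monoid over $R$ is a monoid $X$ (identity $1_X$) with a map $R\times X\to X$, $(\alpha,x)\mapsto\alpha\cdot x$, such that $1\cdot x=x$, $\alpha\cdot(\beta\cdot x)=\alpha\beta\cdot x$ and $\alpha\cdot xy=(\alpha\cdot x)y=x(\alpha\cdot y)$ for all $\alpha,\beta\in R$, $x,y\in X$. Two elements $x,y\in X$ are commensurable, $x\sim y$, if $\alpha\cdot x=\beta\cdot y$ for some $\alpha,\beta\in R$; this is an equivalence relation, and its equivalence classes are called orbitoids (commensurability classes). Every orbitoid $\mathsf{C}$ has a unique zero element $0_{\mathsf{C}}$ with $0_{\mathsf{C}}=0\cdot x$ for all $x\in\mathsf{C}$; $\mathsf{C}$ is trivial if $\mathsf{C}=\{0_{\mathsf{C}}\}$. A unit element for an orbitoid $\mathsf{C}$ is some $u\in\mathsf{C}$ such that every $x\in\mathsf{C}$ equals $\lambda\cdot u$ for some $\lambda\in R$, and such that $\lambda\cdot u=\lambda'\cdot u$ implies $\lambda=\lambda'$.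 For $x=\rho\cdot u$ and $y=\sigma\cdot u$ in $\mathsf{C}$ ($u$ a unit element for $\mathsf{C}$), the sum is defined as $x+y=(\rho+\sigma)\cdot u$; this does not depend on the choice of unit element $u$. *)

theory Defs
  imports Main
begin

definition scalable_monoid :: "('r::ring_1 \<Rightarrow> 'x::monoid_mult \<Rightarrow> 'x) \<Rightarrow> bool" where
  "scalable_monoid sc \<longleftrightarrow>
     (\<forall>x. sc 1 x = x) \<and>
     (\<forall>a b x. sc a (sc b x) = sc (a * b) x) \<and>
     (\<forall>a x y. sc a (x * y) = (sc a x) * y \<and> sc a (x * y) = x * (sc a y))"

definition commensurable :: "('r::ring_1 \<Rightarrow> 'x::monoid_mult \<Rightarrow> 'x) \<Rightarrow> 'x \<Rightarrow> 'x \<Rightarrow> bool" where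
  "commensurable sc x y \<longleftrightarrow> (\<exists>a b. sc a x = sc b y)"

definition orbitoid :: "('r::ring_1 \<Rightarrow> 'x::monoid_mult \<Rightarrow> 'x) \<Rightarrow> 'x set \<Rightarrow> bool" where
  "orbitoid sc C \<longleftrightarrow> (\<exists>x. C = {y. commensurable sc x y})"

text \<open>The zero element of an orbitoid: 0 \<cdot> x for any x in C.\<close>
definition orb_zero :: "('r::ring_1 \<Rightarrow> 'x::monoid_mult \<Rightarrow> 'x) \<Rightarrow> 'x set \<Rightarrow> 'x" where
  "orb_zero sc C = sc 0 (SOME x. x \<in> C)"

definition trivial_orbitoid :: "('r::ring_1 \<Rightarrow> 'x::monoid_mult \<Rightarrow> 'x) \<Rightarrow> 'x set \<Rightarrow> bool" where
  "trivial_orbitoid sc C \<longleftrightarrow> C = {orb_zero sc C}"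

definition unit_element :: "('r::ring_1 \<Rightarrow> 'x::monoid_mult \<Rightarrow> 'x) \<Rightarrow> 'x set \<Rightarrow> 'x \<Rightarrow> bool" where
  "unit_element sc C u \<longleftrightarrow> u \<in> C \<and> (\<forall>x\<in>C. \<exists>l. x = sc l u) \<and>
     (\<forall>l l'. sc l u = sc l' u \<longrightarrow> l = l')"

definition orb_add :: "('r::ring_1 \<Rightarrow> 'x::monoid_mult \<Rightarrow> 'x) \<Rightarrow> 'x set \<Rightarrow> 'x \<Rightarrow> 'x \<Rightarrow> 'x" where
  "orb_add sc C x y =
     (let u = (SOME u. unit_element sc C u) in
        sc ((THE r. x = sc r u) + (THE s. y = sc s u)) u)"

definition module_on :: "'x set \<Rightarrow> ('x \<Rightarrow> 'x \<Rightarrow> 'x) \<Rightarrow> 'x \<Rightarrow> ('r::ring_1 \<Rightarrow> 'x \<Rightarrow> 'x) \<Rightarrow> bool" where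
  "module_on M add z sm \<longleftrightarrow>
     (\<forall>x\<in>M. \<forall>y\<in>M. add x y \<in> M) \<and> z \<in> M \<and> (\<forall>a. \<forall>x\<in>M. sm a x \<in> M) \<and>
     (\<forall>x\<in>M. \<forall>y\<in>M. \<forall>w\<in>M. add (add x y) w = add x (add y w)) \<and>
     (\<forall>x\<in>M. \<forall>y\<in>M. add x y = add y x) \<and>
     (\<forall>x\<in>M. add z x = x) \<and>
     (\<forall>x\<in>M. \<exists>y\<in>M. add x y = z) \<and>
     (\<forall>a. \<forall>x\<in>M. \<forall>y\<in>M. sm a (add x y) = add (sm a x) (sm a y)) \<and>
     (\<forall>a b. \<forall>x\<in>M. sm (a + b) x = add (sm a x) (sm b x)) \<and>
     (\<forall>a b. \<forall>x\<in>M. sm (a * b) x = sm a (sm b x)) \<and>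
     (\<forall>x\<in>M. sm 1 x = x)"

definition free_rank1_module_on :: "'x set \<Rightarrow> ('x \<Rightarrow> 'x \<Rightarrow> 'x) \<Rightarrow> 'x \<Rightarrow> ('r::ring_1 \<Rightarrow> 'x \<Rightarrow> 'x) \<Rightarrow> bool" where
  "free_rank1_module_on M add z sm \<longleftrightarrow> module_on M add z sm \<and>
     (\<exists>u\<in>M. \<forall>x\<in>M. \<exists>!a. x = sm a u)"

end

theory Submission
  imports Defs
begin

text \<open>A unit element u identifies the orbitoid with R via \<lambda> \<mapsto> \<lambda> \<cdot> u, and under this
  identification the addition and scalar multiplication of the orbitoid become those of
  the regular module R. Commutativity of R comes from computing (\<alpha> \<cdot> u)(\<beta> \<cdot> 1) in two ways,
  which gives \<alpha>\<beta> \<cdot> u = \<beta>\<alpha> \<cdot> u; if R were the zero ring, the orbitoid would collapse to its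
  zero element.\<close>

lemma scalable_monoidD:
  assumes "scalable_monoid sc"
  shows sc_one: "sc 1 x = x"
    and sc_sc: "sc a (sc b x) = sc (a * b) x"
    and sc_mult_left: "sc a (x * y) = sc a x * y"
    and sc_mult_right: "sc a (x * y) = x * sc a y"
  using assms unfolding scalable_monoid_def by blast+

lemma commensurable_sc_zero:
  assumes "scalable_monoid sc" and "commensurable sc x y"
  shows "sc 0 x = sc 0 y"
proof -
  from assms(2) obtain a b where ab: "sc a x = sc b y"
    unfolding commensurable_def by blast
  have "sc 0 x = sc 0 (sc a x)" using sc_sc[OF assms(1)] by simp
  also have "\<dots> = sc 0 (sc b y)" using ab by simp
  also have "\<dots> = sc 0 y" using sc_sc[OF assms(1)] by simp
  finally show ?thesis .
qed

lemma orbitoid_sc_closed: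
  assumes "scalable_monoid sc" and "orbitoid sc C" and "x \<in> C"
  shows "sc l x \<in> C"
proof -
  from assms(2) obtain x0 where C: "C = {y. commensurable sc x0 y}"
    unfolding orbitoid_def by blast
  have "sc 0 x0 = sc 0 x"
    using commensurable_sc_zero[OF assms(1)] assms(3) C by blast
  also have "\<dots> = sc 0 (sc l x)" using sc_sc[OF assms(1)] by simp
  finally show ?thesis using C unfolding commensurable_def by blast
qed

lemma orb_zero_eq:
  assumes "scalable_monoid sc" and "orbitoid sc C" and "x \<in> C"
  shows "orb_zero sc C = sc 0 x"
proof -
  from assms(2) obtain x0 where C: "C = {y. commensurable sc x0 y}"
    unfolding orbitoid_def by blast
  have "(SOME y. y \<in> C) \<in> C" using assms(3) by (rule someI)
  then have "sc 0 (SOME y. y \<in> C) = sc 0 x0" and "sc 0 x = sc 0 x0"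
    using commensurable_sc_zero[OF assms(1)] assms(3) C by (metis mem_Collect_eq)+
  then show ?thesis unfolding orb_zero_def by simp
qed

lemma unit_element_sc_inj:
  "unit_element sc C u \<Longrightarrow> sc l u = sc l' u \<Longrightarrow> l = l'"
  unfolding unit_element_def by blast

lemma orbitoid_unit_element_range:
  assumes "scalable_monoid sc" and "orbitoid sc C" and "unit_element sc C u"
  shows "C = range (\<lambda>l. sc l u)"
  using assms orbitoid_sc_closed unfolding unit_element_def by blast

lemma the_sc_unit_element:
  "unit_element sc C u \<Longrightarrow> (THE r. sc l u = sc r u) = l"
  by (rule the_equality) (auto dest: unit_element_sc_inj)

text \<open>The sum does not depend on the unit element chosen in the definition of orb_add.\<close>

lemma orb_add_unit_element:
  assumes "scalable_monoid sc" and "unit_element sc C u"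
  shows "orb_add sc C (sc a u) (sc b u) = sc (a + b) u"
proof -
  define v where "v = (SOME u. unit_element sc C u)"
  have v: "unit_element sc C v" unfolding v_def using assms(2) by (rule someI)
  moreover have "u \<in> C" using assms(2) unfolding unit_element_def by blast
  ultimately obtain c where u: "u = sc c v" unfolding unit_element_def by blast
  have "orb_add sc C (sc a u) (sc b u) = sc (a * c + b * c) v"
    unfolding orb_add_def Let_def v_def[symmetric] u sc_sc[OF assms(1)]
      the_sc_unit_element[OF v] ..
  also have "\<dots> = sc (a + b) u"
    unfolding u sc_sc[OF assms(1)] by (simp add: distrib_right)
  finally show ?thesis .
qed

lemma mult_commute_if_inj_sc:
  fixes sc :: "'r::ring_1 \<Rightarrow> 'x::monoid_mult \<Rightarrow> 'x" and a b :: 'r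
  assumes "scalable_monoid sc" and inj: "\<And>l l'. sc l u = sc l' u \<Longrightarrow> l = l'"
  shows "a * b = b * a"
proof (rule inj)
  have "sc (a * b) u = sc a u * sc b 1"
    by (metis assms(1) sc_sc sc_mult_left sc_mult_right mult_1_right)
  moreover have "sc (b * a) u = sc a u * sc b 1"
    by (metis assms(1) sc_sc sc_mult_right mult_1_right)
  ultimately show "sc (a * b) u = sc (b * a) u" by simp
qed

lemma zero_neq_one_if_nontrivial_orbitoid:
  fixes sc :: "'r::ring_1 \<Rightarrow> 'x::monoid_mult \<Rightarrow> 'x"
  assumes "scalable_monoid sc" and "orbitoid sc C" and "\<not> trivial_orbitoid sc C"
    and "unit_element sc C u"
  shows "(0::'r) \<noteq> 1"
proof
  assume "(0::'r) = 1"
  then have "l = 0" for l :: 'r by (metis mult_1_right mult_zero_right)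
  then have "sc l u = sc 0 u" for l by metis
  then have "C = {sc 0 u}"
    using orbitoid_unit_element_range[OF assms(1,2,4)] by auto
  moreover have "orb_zero sc C = sc 0 u"
    using orb_zero_eq[OF assms(1,2)] assms(4) unfolding unit_element_def by blast
  ultimately show False using assms(3) unfolding trivial_orbitoid_def by simp
qed

lemma orbitoid_unit_element_free_rank1_module:
  fixes sc :: "'r::ring_1 \<Rightarrow> 'x::monoid_mult \<Rightarrow> 'x"
  assumes "scalable_monoid sc" and "orbitoid sc C" and u: "unit_element sc C u"
  shows "free_rank1_module_on C (orb_add sc C) (orb_zero sc C) sc"
proof -
  have C: "C = range (\<lambda>l. sc l u)"
    using orbitoid_unit_element_range[OF assms] .
  have inC: "sc l u \<in> C" for l using C by blast
  have ball: "(\<forall>x\<in>C. P x) = (\<forall>l. P (sc l u))" for P using C by auto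
  have bex: "(\<exists>x\<in>C. P x) = (\<exists>l. P (sc l u))" for P using C by auto
  have zero: "orb_zero sc C = sc 0 u"
    using orb_zero_eq[OF assms(1,2)] u unfolding unit_element_def by blast
  have neg: "\<exists>m. sc (l + m) u = sc 0 u" for l :: 'r by (rule exI[of _ "- l"]) simp
  have "module_on C (orb_add sc C) (orb_zero sc C) sc"
    unfolding module_on_def zero ball bex
    by (auto simp: orb_add_unit_element[OF assms(1) u] sc_sc[OF assms(1)] sc_one[OF assms(1)]
        algebra_simps inC neg)
  moreover have "\<exists>u\<in>C. \<forall>x\<in>C. \<exists>!a. x = sc a u"
    using u unit_element_sc_inj unfolding unit_element_def by metis
  ultimately show ?thesis unfolding free_rank1_module_on_def by blast
qed

theorem proposition2p36:
  fixes sc :: "'r::ring_1 \<Rightarrow> 'x::monoid_mult \<Rightarrow> 'x"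
    and C :: "'x set"
  assumes "scalable_monoid sc"
    and "orbitoid sc C"
    and "\<not> trivial_orbitoid sc C"
    and "\<exists>u. unit_element sc C u"
  shows "(0::'r) \<noteq> 1 \<and> (\<forall>a b :: 'r. a * b = b * a) \<and>
         free_rank1_module_on C (orb_add sc C) (orb_zero sc C) sc"
proof -
  from assms(4) obtain u where u: "unit_element sc C u" ..
  have "(0::'r) \<noteq> 1"
    using zero_neq_one_if_nontrivial_orbitoid[OF assms(1-3) u] .
  moreover have "\<forall>a b :: 'r. a * b = b * a"
    using mult_commute_if_inj_sc[OF assms(1) unit_element_sc_inj[OF u]] by blast
  moreover have "free_rank1_module_on C (orb_add sc C) (orb_zero sc C) sc"
    using orbitoid_unit_element_free_rank1_module[OF assms(1,2) u] .
  ultimately show ?thesis by blast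
qed

end
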